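(* Let $p\ge k\ge 1$ be integers and let $\mathbf y\in\mathbb{R}^p$. Let $\mathcal{I}^k\subseteq\{1,\dots,p\}$ be a top-$k$ index set of $\mathbf y$ (a set of $k$ indices of entries of largest magnitude), and let $\operatorname{top}_k(\mathbf y)$ be the vector that agrees with $\mathbf y$ on $\mathcal{I}^k$ and is $0$ elsewhere. Let $\gamma_0\ge 0$ be such that $\|\mathbf y-\operatorname{top}_k(\mathbf y)\|^2\le\gamma_0\|\mathbf y\|^2$. Let $0\le d\le k$ be an integer, and let $\tilde{\mathcal I}^k$ be a $k$-element index set with $\mathbf H(\mathcal I^k,\tilde{\mathcal I}^k)=2d$, chosen at random so that its $k-d$ common indices with $\mathcal{I}^k$ form a uniformly random $(k-d)$-subset of $\mathcal I^k$. Define $\mathrm{comp}(\mathbf y)\in\mathbb{R}^p$ by $\mathrm{comp}(\mathbf y)_m=\mathbf y_m$ if $m\in\tilde{\mathcal I}^k$ and $0$ otherwise. Then $$\mathbb{E}\|\mathbf y-\mathrm{comp}(\mathbf y)\|^2\le\gamma\|\mathbf y\|^2,\qquad \gamma:=\frac{d}{k}+\Big(1-\frac{d}{k}\Big)\gamma_0 .$$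
   Context: For a set $\mathcal I$ of $k$ indices in $\{1,\dots,p\}$, let $\mathbf x_{\mathcal I}\in\{0,1\}^p$ be its indicator vector. For two such sets, $\mathbf H(\mathcal I_1,\mathcal I_2)$ denotes the Hamming distance between $\mathbf x_{\mathcal I_1}$ and $\mathbf x_{\mathcal I_2}$; for two $k$-element sets it equals $2d$ where $d=k-|\mathcal I_1\cap\mathcal I_2|$. $\|\cdot\|$ is the Euclidean norm. *)

theory Defs
  imports "HOL-Probability.Probability"
begin

text \<open>Vectors in R^p are represented as functions nat => real, indices 1..p.\<close>

definition sqnorm :: "nat \<Rightarrow> (nat \<Rightarrow> real) \<Rightarrow> real" where
  "sqnorm p y = (\<Sum>m\<in>{1..p}. (y m)^2)"

definition is_top_k_set :: "nat \<Rightarrow> nat \<Rightarrow> (nat \<Rightarrow> real) \<Rightarrow> nat set \<Rightarrow> bool" where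
  "is_top_k_set p k y I \<longleftrightarrow> I \<subseteq> {1..p} \<and> card I = k \<and>
     (\<forall>i\<in>I. \<forall>j\<in>{1..p} - I. \<bar>y j\<bar> \<le> \<bar>y i\<bar>)"

text \<open>Restriction of y to an index set (zero elsewhere): top_k(y) = restr I y, comp(y) = restr I~ y.\<close>
definition restr :: "nat set \<Rightarrow> (nat \<Rightarrow> real) \<Rightarrow> nat \<Rightarrow> real" where
  "restr J y m = (if m \<in> J then y m else 0)"

definition hamming :: "nat \<Rightarrow> nat set \<Rightarrow> nat set \<Rightarrow> nat" where
  "hamming p I J = card {m\<in>{1..p}. (m \<in> I) \<noteq> (m \<in> J)}"

end

theory Submission
  imports Defs
begin

text \<open>Keeping the coordinates in \<open>J\<close> removes at least the energy of \<open>y\<close> on \<open>J \<inter> I\<close>, and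
  \<open>J \<inter> I\<close> is a uniformly random \<open>(k - d)\<close>-subset of \<open>I\<close>. Each index of \<open>I\<close> lies in such a
  subset with probability \<open>(k - d) / k\<close>, so the expected energy removed is at least
  \<open>(1 - d/k) \<parallel>top\<^sub>k y\<parallel>\<^sup>2 \<ge> (1 - d/k) (1 - \<gamma>0) \<parallel>y\<parallel>\<^sup>2\<close>.\<close>

lemma card_subsets_containing:
  assumes "finite I" "m \<in> I" "0 < r"
  shows "card {S. S \<subseteq> I \<and> card S = r \<and> m \<in> S} = (card I - 1) choose (r - 1)"
proof -
  have "bij_betw (insert m) {T. T \<subseteq> I - {m} \<and> card T = r - 1} {S. S \<subseteq> I \<and> card S = r \<and> m \<in> S}"
  proof (rule bij_betw_byWitness[where f' = "\<lambda>S. S - {m}"])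
    show "insert m ` {T. T \<subseteq> I - {m} \<and> card T = r - 1} \<subseteq> {S. S \<subseteq> I \<and> card S = r \<and> m \<in> S}"
      using assms by (auto simp: card_insert_if finite_subset)
    show "(\<lambda>S. S - {m}) ` {S. S \<subseteq> I \<and> card S = r \<and> m \<in> S} \<subseteq> {T. T \<subseteq> I - {m} \<and> card T = r - 1}"
      using assms by (auto simp: finite_subset)
  qed auto
  then have "card {S. S \<subseteq> I \<and> card S = r \<and> m \<in> S} = card {T. T \<subseteq> I - {m} \<and> card T = r - 1}"
    by (simp add: bij_betw_same_card)
  also have "\<dots> = (card I - 1) choose (r - 1)"
    using assms by (simp add: n_subsets)
  finally show ?thesis .
qed

lemma expectation_sum_uniform_subset:
  fixes f :: "'a \<Rightarrow> real"
  assumes "finite I" "r \<le> card I"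
  shows "measure_pmf.expectation (pmf_of_set {S. S \<subseteq> I \<and> card S = r}) (sum f)
           = real r / real (card I) * sum f I"
proof (cases "r = 0")
  case True
  then have "{S. S \<subseteq> I \<and> card S = r} = {{}}"
    using assms(1) by (auto dest: finite_subset)
  then show ?thesis
    using True by (simp add: pmf_of_set_singleton)
next
  case False
  define F where "F = {S. S \<subseteq> I \<and> card S = r}"
  define n where "n = card I"
  have F_finite: "finite F" and F_card: "card F = n choose r"
    using assms(1) by (simp_all add: F_def n_def n_subsets)
  have "F \<noteq> {}"
    using F_card assms(2) n_def by auto
  have "(\<Sum>S\<in>F. sum f S) = (\<Sum>S\<in>F. \<Sum>m\<in>{m. m \<in> I \<and> m \<in> S}. f m)"
    by (intro sum.cong) (auto simp: F_def intro: arg_cong2[where f = sum])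
  also have "\<dots> = (\<Sum>m\<in>I. \<Sum>S\<in>{S. S \<in> F \<and> m \<in> S}. f m)"
    using F_finite assms(1) by (rule sum.swap_restrict)
  also have "\<dots> = (\<Sum>m\<in>I. real ((n - 1) choose (r - 1)) * f m)"
    using card_subsets_containing[OF assms(1) _ , of _ r] False
    by (intro sum.cong) (simp_all add: F_def n_def conj_assoc)
  finally have double_count: "(\<Sum>S\<in>F. sum f S) = real ((n - 1) choose (r - 1)) * sum f I"
    by (simp add: sum_distrib_left)
  have absorption: "real r * real (n choose r) = real n * real ((n - 1) choose (r - 1))"
    using times_binomial_minus1_eq[of r n] False by (metis of_nat_mult neq0_conv)
  have "0 < n" and "0 < n choose r"
    using False assms(2) n_def by simp_all
  have "measure_pmf.expectation (pmf_of_set F) (sum f)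
          = real ((n - 1) choose (r - 1)) * sum f I / real (n choose r)"
    using \<open>F \<noteq> {}\<close> F_finite F_card double_count by (simp add: integral_pmf_of_set)
  also have "\<dots> = real r / real n * sum f I"
    using absorption \<open>0 < n\<close> \<open>0 < n choose r\<close> by (simp add: field_simps)
  finally show ?thesis
    by (simp add: F_def n_def)
qed

lemma sqnorm_diff_restr:
  assumes "J \<subseteq> {1..p}"
  shows "sqnorm p (\<lambda>m. y m - restr J y m) = sqnorm p y - (\<Sum>m\<in>J. (y m)\<^sup>2)"
proof -
  have "sqnorm p (\<lambda>m. y m - restr J y m) = (\<Sum>m\<in>{1..p}. (y m)\<^sup>2 - (if m \<in> J then (y m)\<^sup>2 else 0))"
    unfolding sqnorm_def restr_def by (rule sum.cong) auto
  also have "\<dots> = sqnorm p y - (\<Sum>m\<in>{1..p} \<inter> J. (y m)\<^sup>2)"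
    by (simp add: sqnorm_def sum_subtractf sum.If_cases)
  finally show ?thesis
    using assms by (simp add: Int_absorb1)
qed

theorem lemma1:
  fixes p k d :: nat and y :: "nat \<Rightarrow> real" and I :: "nat set" and \<gamma>0 :: real
    and M :: "nat set pmf"
  assumes "1 \<le> k" and "k \<le> p"
    and "is_top_k_set p k y I"
    and "\<gamma>0 \<ge> 0"
    and "sqnorm p (\<lambda>m. y m - restr I y m) \<le> \<gamma>0 * sqnorm p y"
    and "d \<le> k"
    and "\<forall>J\<in>set_pmf M. J \<subseteq> {1..p} \<and> card J = k \<and> hamming p I J = 2 * d"
    and "map_pmf (\<lambda>J. J \<inter> I) M = pmf_of_set {S. S \<subseteq> I \<and> card S = k - d}"
  shows "measure_pmf.expectation M (\<lambda>J. sqnorm p (\<lambda>m. y m - restr J y m))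
           \<le> (real d / real k + (1 - real d / real k) * \<gamma>0) * sqnorm p y"
proof -
  define N where "N = sqnorm p y"
  define g :: "nat set \<Rightarrow> real" where "g = sum (\<lambda>m. (y m)\<^sup>2)"
  define t where "t = real d / real k"
  have I_sub: "I \<subseteq> {1..p}" and I_card: "card I = k"
    using assms(3) by (auto simp: is_top_k_set_def)
  have "set_pmf M \<subseteq> Pow {1..p}"
    using assms(7) by auto
  then have M_finite: "finite (set_pmf M)"
    by (rule finite_subset) simp
  note integrable = integrable_measure_pmf_finite[OF M_finite]
  have "measure_pmf.expectation M (\<lambda>J. sqnorm p (\<lambda>m. y m - restr J y m))
          \<le> measure_pmf.expectation M (\<lambda>J. N - g (J \<inter> I))"
  proof (intro integral_mono_AE integrable AE_pmfI)
    fix J assume "J \<in> set_pmf M"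
    then have J_sub: "J \<subseteq> {1..p}"
      using assms(7) by auto
    then have "finite J"
      by (rule finite_subset) simp
    then have "g (J \<inter> I) \<le> g J"
      unfolding g_def by (intro sum_mono2) auto
    then show "sqnorm p (\<lambda>m. y m - restr J y m) \<le> N - g (J \<inter> I)"
      using sqnorm_diff_restr[OF J_sub] by (simp add: N_def g_def)
  qed
  also have "\<dots> = N - measure_pmf.expectation (map_pmf (\<lambda>J. J \<inter> I) M) g"
    by (simp add: Bochner_Integration.integral_diff[OF integrable integrable])
  also have "\<dots> = N - (1 - t) * g I"
    using expectation_sum_uniform_subset[of I "k - d" "\<lambda>m. (y m)\<^sup>2"] I_sub I_card assms(1,6)
    by (simp add: assms(8) g_def t_def finite_subset of_nat_diff diff_divide_distrib)
  also have "\<dots> = t * N + (1 - t) * (N - g I)"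
    by algebra
  also have "\<dots> \<le> t * N + (1 - t) * (\<gamma>0 * N)"
    using assms(1,5,6) sqnorm_diff_restr[OF I_sub]
    by (intro add_left_mono mult_left_mono) (simp_all add: N_def g_def t_def)
  finally show ?thesis
    by (simp add: N_def t_def algebra_simps)
qed

end
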